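(* Let $n\ge1$, $\boldsymbol\mu\in\mathcal S_n^\cup$, $\boldsymbol\xi\in\mathbb R^n$, $\mathbf y=\boldsymbol\mu+\boldsymbol\xi$, $\hat{\boldsymbol\mu}=\Pi_{\mathcal S_n^\cup}(\mathbf y)$, and let $(\hat T_1,\dots,\hat T_{\hat q})$, $\hat q=q(\hat{\boldsymbol\mu})$, be a partition of $\{1,\dots,n\}$ into sets of consecutive integers such that $\hat{\boldsymbol\mu}$ is affine on each $\hat T_j$. Then $$\|\hat{\boldsymbol\mu}-\boldsymbol\mu\|_2^2\le\sum_{j=1}^{\hat q}\big\|\Pi_{\mathcal S^\cap_{|\hat T_j|}}(\boldsymbol\xi_{\hat T_j})\big\|_2^2 .$$
   Context: For $m\ge3$, $\mathcal S_m^\cup=\{\mathbf u\in\mathbb R^m:2u_i\le u_{i+1}+u_{i-1},\ i=2,\dots,m-1\}$; $\mathcal S_1^\cup=\mathbb R$, $\mathcal S_2^\cup=\mathbb R^2$; $\mathcal S_m^\cap=-\mathcal S_m^\cup$ (concave sequences). $\Pi_K$ is Euclidean projection onto $K$. For $\mathbf u\in\mathcal S_n^\cup$, $q(\mathbf u)$ is one plus the number of strict inequalities $2u_i<u_{i+1}+u_{i-1}$, i.e. the number of affine pieces. For $T=\{t_1<\dots<t_{|T|}\}$, $\boldsymbol\xi_T=(\xi_{t_1},\dots,\xi_{t_{|T|}})^T$. *)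

theory Defs
  imports Complex_Main
begin

text \<open>Vectors of R^m are represented as functions nat => real, with components
  indexed 0..m-1 (component i here is component i+1 of the paper), and
  vanishing outside {0..<m}.\<close>

definition vec_space :: "nat \<Rightarrow> (nat \<Rightarrow> real) set" where
  "vec_space m = {u. \<forall>i\<ge>m. u i = 0}"

definition cvx_cone :: "nat \<Rightarrow> (nat \<Rightarrow> real) set" where
  "cvx_cone m = {u \<in> vec_space m. \<forall>i. 1 \<le> i \<and> i + 1 < m \<longrightarrow> 2 * u i \<le> u (i + 1) + u (i - 1)}"

definition ccv_cone :: "nat \<Rightarrow> (nat \<Rightarrow> real) set" where
  "ccv_cone m = uminus ` cvx_cone m"

definition sqdist :: "nat \<Rightarrow> (nat \<Rightarrow> real) \<Rightarrow> (nat \<Rightarrow> real) \<Rightarrow> real" where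
  "sqdist m u v = (\<Sum>i<m. (u i - v i)^2)"

definition sqnorm :: "nat \<Rightarrow> (nat \<Rightarrow> real) \<Rightarrow> real" where
  "sqnorm m u = (\<Sum>i<m. (u i)^2)"

definition proj :: "nat \<Rightarrow> (nat \<Rightarrow> real) set \<Rightarrow> (nat \<Rightarrow> real) \<Rightarrow> (nat \<Rightarrow> real)" where
  "proj m K y = (THE x. x \<in> K \<and> (\<forall>z\<in>K. sqdist m y x \<le> sqdist m y z))"

text \<open>Number of affine pieces q(u) of a convex sequence u in R^n.\<close>
definition num_pieces :: "nat \<Rightarrow> (nat \<Rightarrow> real) \<Rightarrow> nat" where
  "num_pieces n u = 1 + card {i. 1 \<le> i \<and> i + 1 < n \<and> 2 * u i < u (i + 1) + u (i - 1)}"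

definition subvec :: "(nat \<Rightarrow> real) \<Rightarrow> nat set \<Rightarrow> nat \<Rightarrow> real" where
  "subvec x T k = (if k < card T then x (sorted_list_of_set T ! k) else 0)"

end

theory Submission
  imports Defs
begin

text \<open>Write \<open>D = muhat - mu\<close>. Testing the projection \<open>muhat\<close> of \<open>mu + xi\<close> against
  \<open>mu\<close>, which lies in the convex cone, gives \<open>\<parallel>D\<parallel>\<^sup>2 \<le> \<langle>xi, D\<rangle>\<close>. On a block where
  \<open>muhat\<close> is affine, \<open>D\<close> is concave; if \<open>P\<close> is the projection of \<open>xi\<close> restricted to the
  block onto the concave cone, then \<open>P + D\<close> is concave too, so the variational inequality gives
  \<open>\<langle>xi, D\<rangle> \<le> \<langle>P, D\<rangle> \<le> (\<parallel>P\<parallel>\<^sup>2 + \<parallel>D\<parallel>\<^sup>2)/2\<close> on the block. Summing over the blocks and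
  absorbing \<open>\<parallel>D\<parallel>\<^sup>2/2\<close> into the left-hand side gives the bound.\<close>

text \<open>In finite dimension, closedness can be stated with coordinatewise convergence.\<close>

definition closed_convex_in :: "nat \<Rightarrow> (nat \<Rightarrow> real) set \<Rightarrow> bool" where
  "closed_convex_in m K \<longleftrightarrow> K \<subseteq> vec_space m \<and> K \<noteq> {} \<and>
     (\<forall>x z t. x \<in> K \<longrightarrow> z \<in> K \<longrightarrow> 0 \<le> t \<longrightarrow> t \<le> 1 \<longrightarrow> (\<lambda>i. (1 - t) * x i + t * z i) \<in> K) \<and>
     (\<forall>X L. (\<forall>k. X k \<in> K) \<longrightarrow> (\<forall>i. (\<lambda>k. X k i) \<longlonglongrightarrow> L i) \<longrightarrow> L \<in> K)"

lemma closed_convex_in_vec_space: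
  "closed_convex_in m K \<Longrightarrow> x \<in> K \<Longrightarrow> m \<le> i \<Longrightarrow> x i = 0"
  unfolding closed_convex_in_def vec_space_def by blast

lemma closed_convex_in_convex:
  "closed_convex_in m K \<Longrightarrow> x \<in> K \<Longrightarrow> z \<in> K \<Longrightarrow> 0 \<le> t \<Longrightarrow> t \<le> 1
    \<Longrightarrow> (\<lambda>i. (1 - t) * x i + t * z i) \<in> K"
  unfolding closed_convex_in_def by blast

lemma closed_convex_in_closed:
  "closed_convex_in m K \<Longrightarrow> (\<And>k. X k \<in> K) \<Longrightarrow> (\<And>i. (\<lambda>k. X k i) \<longlonglongrightarrow> L i) \<Longrightarrow> L \<in> K"
  unfolding closed_convex_in_def by blast

subsection \<open>Euclidean projection onto a closed convex set\<close>

lemma sqdist_nonneg: "0 \<le> sqdist m u v"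
  unfolding sqdist_def by (simp add: sum_nonneg)

lemma sqdist_component_le: "i < m \<Longrightarrow> (u i - v i)^2 \<le> sqdist m u v"
  unfolding sqdist_def by (rule member_le_sum) auto

lemma sqdist_parallelogram:
  "sqdist m a b = 2 * sqdist m y a + 2 * sqdist m y b
     - 4 * sqdist m y (\<lambda>i. (1 - 1/2) * a i + 1/2 * b i)"
proof -
  have "sqdist m a b = (\<Sum>i<m. 2 * (y i - a i)^2 + 2 * (y i - b i)^2
          - 4 * (y i - ((1 - 1/2) * a i + 1/2 * b i))^2)"
    unfolding sqdist_def by (rule sum.cong) (auto simp: power2_eq_square algebra_simps)
  then show ?thesis
    unfolding sqdist_def by (simp add: sum.distrib sum_subtractf sum_distrib_left)
qed

lemma Cauchy_if_sq_diff_le: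
  fixes a b :: "nat \<Rightarrow> real"
  assumes bound: "\<And>k l. (a k - a l)^2 \<le> b k + b l" and b: "b \<longlonglongrightarrow> 0"
  shows "Cauchy a"
proof (rule CauchyI)
  fix e :: real assume e: "0 < e"
  have "0 < e^2 / 2" using e by simp
  then have "\<forall>\<^sub>F k in sequentially. b k < e^2 / 2"
    using order_tendstoD(2)[OF b] by blast
  then obtain N where N: "\<And>k. N \<le> k \<Longrightarrow> b k < e^2 / 2"
    unfolding eventually_sequentially by blast
  show "\<exists>M. \<forall>k\<ge>M. \<forall>l\<ge>M. norm (a k - a l) < e"
  proof (intro exI allI impI)
    fix k l assume "N \<le> k" "N \<le> l"
    then have "(a k - a l)^2 < e^2" using bound[of k l] N[of k] N[of l] by linarith
    then show "norm (a k - a l) < e"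
      using power_less_imp_less_base[of "\<bar>a k - a l\<bar>" 2 e] e by simp
  qed
qed

lemma proj_exists:
  assumes K: "closed_convex_in m K"
  shows "\<exists>x\<in>K. \<forall>z\<in>K. sqdist m y x \<le> sqdist m y z"
proof -
  define f where "f z = sqdist m y z" for z
  define d where "d = Inf (f ` K)"
  have "K \<noteq> {}" using K unfolding closed_convex_in_def by blast
  have bdd: "bdd_below (f ` K)"
    unfolding f_def by (rule bdd_belowI[of _ 0]) (auto simp: sqdist_nonneg)
  have d_le: "\<And>z. z \<in> K \<Longrightarrow> d \<le> f z"
    unfolding d_def using bdd by (auto intro: cInf_lower)
  have "\<exists>x\<in>K. f x < d + 1 / (real k + 1)" for k
    using cInf_lessD[of "f ` K" "d + 1 / (real k + 1)"] \<open>K \<noteq> {}\<close>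
    unfolding d_def by (auto simp: add_pos_pos)
  then obtain X where XK: "\<And>k. X k \<in> K" and Xf: "\<And>k. f (X k) < d + 1 / (real k + 1)"
    by metis
  \<comment> \<open>the midpoint of \<open>X k\<close> and \<open>X l\<close> lies in \<open>K\<close>, hence is no closer to \<open>y\<close> than \<open>d\<close>\<close>
  have close: "sqdist m (X k) (X l) \<le> 2 / (real k + 1) + 2 / (real l + 1)" for k l
  proof -
    have "d \<le> f (\<lambda>i. (1 - 1/2) * X k i + 1/2 * X l i)"
      by (intro d_le closed_convex_in_convex[OF K XK XK]) auto
    then show ?thesis
      using sqdist_parallelogram[of m "X k" "X l" y] Xf[of k] Xf[of l] unfolding f_def by linarith
  qed
  have "Cauchy (\<lambda>k. X k i)" for i
  proof (rule Cauchy_if_sq_diff_le[where b = "\<lambda>k. 2 / (real k + 1)"])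
    show "(X k i - X l i)^2 \<le> 2 / (real k + 1) + 2 / (real l + 1)" for k l
    proof (cases "i < m")
      case True
      then show ?thesis using sqdist_component_le[of i m "X k" "X l"] close[of k l] by linarith
    next
      case False
      then show ?thesis using closed_convex_in_vec_space[OF K XK] by simp
    qed
    show "(\<lambda>k. 2 / (real k + 1)) \<longlonglongrightarrow> 0"
      using LIMSEQ_Suc[OF lim_const_over_n[of 2]] by (simp add: add.commute)
  qed
  then obtain L where lim: "\<And>i. (\<lambda>k. X k i) \<longlonglongrightarrow> L i"
    unfolding Cauchy_convergent_iff convergent_def by metis
  have "L \<in> K" using closed_convex_in_closed[OF K XK lim] .
  have "(\<lambda>k. f (X k)) \<longlonglongrightarrow> f L"
    unfolding f_def sqdist_def by (intro tendsto_intros lim)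
  moreover have "(\<lambda>k. f (X k)) \<longlonglongrightarrow> d"
  proof (rule real_tendsto_sandwich[where f = "\<lambda>k. d" and h = "\<lambda>k. d + 1 / (real k + 1)"])
    show "\<forall>\<^sub>F k in sequentially. d \<le> f (X k)" using d_le XK by auto
    show "\<forall>\<^sub>F k in sequentially. f (X k) \<le> d + 1 / (real k + 1)" using Xf by (simp add: less_imp_le)
    show "(\<lambda>k. d + 1 / (real k + 1)) \<longlonglongrightarrow> d"
      using tendsto_add[OF tendsto_const LIMSEQ_Suc[OF lim_const_over_n[of 1]]]
      by (simp add: add.commute)
  qed simp
  ultimately have "f L = d" by (rule LIMSEQ_unique)
  then show ?thesis using \<open>L \<in> K\<close> d_le unfolding f_def by auto
qed

lemma proj_unique:
  assumes K: "closed_convex_in m K"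
    and x: "x \<in> K" "\<forall>z\<in>K. sqdist m y x \<le> sqdist m y z"
    and x': "x' \<in> K" "\<forall>z\<in>K. sqdist m y x' \<le> sqdist m y z"
  shows "x' = x"
proof -
  have "(\<lambda>i. (1 - 1/2) * x i + 1/2 * x' i) \<in> K"
    using closed_convex_in_convex[OF K x(1) x'(1), of "1/2"] by simp
  then have "sqdist m y x \<le> sqdist m y (\<lambda>i. (1 - 1/2) * x i + 1/2 * x' i)" using x by blast
  moreover have "sqdist m y x = sqdist m y x'" using x x' by (meson order_antisym)
  ultimately have "sqdist m x x' \<le> 0" using sqdist_parallelogram[of m x x' y] by linarith
  then have "\<forall>i\<in>{..<m}. (x i - x' i)^2 = 0"
    using sum_nonneg_eq_0_iff[of "{..<m}" "\<lambda>i. (x i - x' i)^2"] sqdist_nonneg[of m x x']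
    unfolding sqdist_def by auto
  then show ?thesis
    using closed_convex_in_vec_space[OF K x(1)] closed_convex_in_vec_space[OF K x'(1)]
    by (metis ext lessThan_iff linorder_not_le power_eq_0_iff right_minus_eq)
qed

lemma proj_in_and_minimal:
  assumes K: "closed_convex_in m K"
  shows "proj m K y \<in> K \<and> (\<forall>z\<in>K. sqdist m y (proj m K y) \<le> sqdist m y z)"
proof -
  have "\<exists>!x. x \<in> K \<and> (\<forall>z\<in>K. sqdist m y x \<le> sqdist m y z)"
    using proj_exists[OF K] proj_unique[OF K] by blast
  then show ?thesis unfolding proj_def by (rule theI')
qed

lemma proj_variational_inequality:
  assumes K: "closed_convex_in m K" and z: "z \<in> K"
  shows "(\<Sum>i<m. (y i - proj m K y i) * (z i - proj m K y i)) \<le> 0"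
proof -
  define x where "x = proj m K y"
  have x: "x \<in> K" "\<forall>z\<in>K. sqdist m y x \<le> sqdist m y z"
    using proj_in_and_minimal[OF K] unfolding x_def by auto
  define A where "A = (\<Sum>i<m. (y i - x i) * (z i - x i))"
  define B where "B = (\<Sum>i<m. (z i - x i)^2)"
  have "0 \<le> B" unfolding B_def by (simp add: sum_nonneg)
  have along_segment: "2 * t * A \<le> t^2 * B" if t: "0 \<le> t" "t \<le> 1" for t
  proof -
    have "sqdist m y x \<le> sqdist m y (\<lambda>i. (1 - t) * x i + t * z i)"
      using x closed_convex_in_convex[OF K x(1) z t] by blast
    also have "sqdist m y (\<lambda>i. (1 - t) * x i + t * z i)
        = (\<Sum>i<m. (y i - x i)^2 - 2 * t * ((y i - x i) * (z i - x i)) + t^2 * (z i - x i)^2)"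
      unfolding sqdist_def by (rule sum.cong) (auto simp: power2_eq_square algebra_simps)
    also have "\<dots> = sqdist m y x - 2 * t * A + t^2 * B"
      unfolding sqdist_def A_def B_def by (simp add: sum.distrib sum_subtractf sum_distrib_left)
    finally show ?thesis by linarith
  qed
  have "A \<le> 0"
  proof (rule ccontr)
    assume "\<not> A \<le> 0"
    \<comment> \<open>a step of length \<open>t = min 1 (A/B)\<close> towards \<open>z\<close> would get strictly closer to \<open>y\<close>\<close>
    define t where "t = (if B = 0 then 1 else min 1 (A / B))"
    have t: "0 < t" "t \<le> 1" "t * B \<le> A"
      using \<open>\<not> A \<le> 0\<close> \<open>0 \<le> B\<close> by (auto simp: t_def field_simps min_def)
    then have "t^2 * B \<le> t * A" by (simp add: power2_eq_square mult.assoc mult_left_mono)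
    moreover have "0 < t * A" using t \<open>\<not> A \<le> 0\<close> by simp
    ultimately show False using along_segment[OF less_imp_le[OF t(1)] t(2)] by linarith
  qed
  then show ?thesis unfolding A_def x_def .
qed

subsection \<open>The cones of convex and concave sequences\<close>

lemma zero_in_cvx_cone: "(\<lambda>i. 0) \<in> cvx_cone m"
  unfolding cvx_cone_def vec_space_def by auto

lemma closed_convex_in_cvx_cone: "closed_convex_in m (cvx_cone m)"
  unfolding closed_convex_in_def
proof (intro conjI allI impI)
  show "cvx_cone m \<subseteq> vec_space m" unfolding cvx_cone_def by auto
  show "cvx_cone m \<noteq> {}" using zero_in_cvx_cone by auto
  fix x z :: "nat \<Rightarrow> real" and t :: real
  assume x: "x \<in> cvx_cone m" and z: "z \<in> cvx_cone m" and t: "0 \<le> t" "t \<le> 1"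
  show "(\<lambda>i. (1 - t) * x i + t * z i) \<in> cvx_cone m"
    unfolding cvx_cone_def vec_space_def
  proof (intro CollectI conjI allI impI)
    fix i assume "m \<le> i"
    then show "(1 - t) * x i + t * z i = 0" using x z unfolding cvx_cone_def vec_space_def by auto
  next
    fix i assume i: "1 \<le> i \<and> i + 1 < m"
    have "(1 - t) * (2 * x i) \<le> (1 - t) * (x (i + 1) + x (i - 1))"
      using x i t unfolding cvx_cone_def by (intro mult_left_mono) auto
    moreover have "t * (2 * z i) \<le> t * (z (i + 1) + z (i - 1))"
      using z i t unfolding cvx_cone_def by (intro mult_left_mono) auto
    ultimately show "2 * ((1 - t) * x i + t * z i)
        \<le> ((1 - t) * x (i + 1) + t * z (i + 1)) + ((1 - t) * x (i - 1) + t * z (i - 1))"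
      by (simp add: algebra_simps)
  qed
next
  fix X :: "nat \<Rightarrow> nat \<Rightarrow> real" and L
  assume X: "\<forall>k. X k \<in> cvx_cone m" and lim: "\<forall>i. (\<lambda>k. X k i) \<longlonglongrightarrow> L i"
  show "L \<in> cvx_cone m" unfolding cvx_cone_def vec_space_def
  proof (intro CollectI conjI allI impI)
    fix i assume "m \<le> i"
    then have "(\<lambda>k. X k i) = (\<lambda>k. 0)" using X unfolding cvx_cone_def vec_space_def by auto
    then show "L i = 0" using lim LIMSEQ_unique[OF _ tendsto_const] by metis
  next
    fix i assume i: "1 \<le> i \<and> i + 1 < m"
    have "\<forall>\<^sub>F k in sequentially. 2 * X k i \<le> X k (i + 1) + X k (i - 1)"
      using X i unfolding cvx_cone_def by auto
    then show "2 * L i \<le> L (i + 1) + L (i - 1)"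
      using lim by (intro tendsto_le[OF sequentially_bot]) (auto intro: tendsto_intros)
  qed
qed

lemma ccv_cone_iff: "x \<in> ccv_cone m \<longleftrightarrow> (\<lambda>i. - x i) \<in> cvx_cone m"
proof
  assume "x \<in> ccv_cone m"
  then show "(\<lambda>i. - x i) \<in> cvx_cone m" unfolding ccv_cone_def by auto
next
  assume "(\<lambda>i. - x i) \<in> cvx_cone m"
  moreover have "x = - (\<lambda>i. - x i)" by auto
  ultimately show "x \<in> ccv_cone m" unfolding ccv_cone_def by blast
qed

lemma closed_convex_in_ccv_cone: "closed_convex_in m (ccv_cone m)"
  unfolding closed_convex_in_def
proof (intro conjI allI impI)
  note cvx = closed_convex_in_cvx_cone[of m]
  show "ccv_cone m \<subseteq> vec_space m"
  proof
    fix x assume "x \<in> ccv_cone m"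
    then show "x \<in> vec_space m"
      using closed_convex_in_vec_space[OF cvx] unfolding ccv_cone_iff vec_space_def by fastforce
  qed
  have "(\<lambda>i. 0) \<in> ccv_cone m" using zero_in_cvx_cone[of m] unfolding ccv_cone_iff by simp
  then show "ccv_cone m \<noteq> {}" by blast
  fix x z :: "nat \<Rightarrow> real" and t :: real
  assume "x \<in> ccv_cone m" "z \<in> ccv_cone m" "0 \<le> t" "t \<le> 1"
  then show "(\<lambda>i. (1 - t) * x i + t * z i) \<in> ccv_cone m"
    using closed_convex_in_convex[OF cvx, of "\<lambda>i. - x i" "\<lambda>i. - z i" t]
    unfolding ccv_cone_iff by simp
next
  fix X :: "nat \<Rightarrow> nat \<Rightarrow> real" and L
  assume "\<forall>k. X k \<in> ccv_cone m" "\<forall>i. (\<lambda>k. X k i) \<longlonglongrightarrow> L i"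
  then have "\<forall>k. (\<lambda>i. - X k i) \<in> cvx_cone m" "\<forall>i. (\<lambda>k. - X k i) \<longlonglongrightarrow> - L i"
    unfolding ccv_cone_iff by (auto intro: tendsto_minus)
  then show "L \<in> ccv_cone m"
    unfolding ccv_cone_iff by (auto intro: closed_convex_in_closed[OF closed_convex_in_cvx_cone])
qed

lemma ccv_cone_add:
  assumes "x \<in> ccv_cone m" "z \<in> ccv_cone m"
  shows "(\<lambda>i. x i + z i) \<in> ccv_cone m"
  unfolding ccv_cone_iff cvx_cone_def vec_space_def
proof (intro CollectI conjI allI impI)
  fix i assume "m \<le> i"
  then show "- (x i + z i) = 0" using assms unfolding ccv_cone_iff cvx_cone_def vec_space_def by simp
next
  fix i assume i: "1 \<le> i \<and> i + 1 < m"
  have "2 * - x i \<le> - x (i + 1) + - x (i - 1)" "2 * - z i \<le> - z (i + 1) + - z (i - 1)"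
    using assms i unfolding ccv_cone_iff cvx_cone_def by auto
  then show "2 * - (x i + z i) \<le> - (x (i + 1) + z (i + 1)) + - (x (i - 1) + z (i - 1))" by simp
qed

lemma affine_minus_cvx_cone_in_ccv_cone:
  assumes ab: "a < b" "b \<le> n" and mu: "mu \<in> cvx_cone n"
    and aff: "\<forall>i\<in>{a..<b}. f i = \<alpha> + \<beta> * real i"
  shows "(\<lambda>k. if k < b - a then f (a + k) - mu (a + k) else 0) \<in> ccv_cone (b - a)"
  unfolding ccv_cone_iff cvx_cone_def vec_space_def
proof (intro CollectI conjI allI impI)
  fix k assume k: "1 \<le> k \<and> k + 1 < b - a"
  have "2 * mu (a + k) \<le> mu (a + k + 1) + mu (a + k - 1)"
    using mu k ab unfolding cvx_cone_def by auto
  moreover have "f (a + k) = \<alpha> + \<beta> * real (a + k)" "f (a + k + 1) = \<alpha> + \<beta> * (real (a + k) + 1)"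
    using aff k by auto
  moreover have "f (a + k - 1) = \<alpha> + \<beta> * (real (a + k) - 1)"
  proof -
    have "a + k - 1 \<in> {a..<b}" "real (a + k - 1) = real (a + k) - 1" using k by auto
    then show ?thesis using aff by metis
  qed
  moreover have "k < b - a" "k + 1 < b - a" "k - 1 < b - a" "a + (k + 1) = a + k + 1"
    "a + (k - 1) = a + k - 1"
    using k by auto
  ultimately show "2 * - (if k < b - a then f (a + k) - mu (a + k) else 0)
      \<le> - (if k + 1 < b - a then f (a + (k + 1)) - mu (a + (k + 1)) else 0)
         + - (if k - 1 < b - a then f (a + (k - 1)) - mu (a + (k - 1)) else 0)"
    by (simp add: distrib_left right_diff_distrib)
qed simp

subsection \<open>The bound on a single block\<close>

lemma sum_atLeastLessThan_shift:
  fixes g :: "nat \<Rightarrow> 'a::comm_monoid_add"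
  shows "a \<le> b \<Longrightarrow> (\<Sum>i\<in>{a..<b}. g i) = (\<Sum>k<b - a. g (a + k))"
  using sum.shift_bounds_nat_ivl[of g 0 a "b - a"] by (simp add: lessThan_atLeast0 add.commute)

lemma inner_le_inner_proj_ccv_cone:
  assumes "c \<in> ccv_cone m"
  shows "(\<Sum>k<m. s k * c k) \<le> (\<Sum>k<m. proj m (ccv_cone m) s k * c k)"
proof -
  define P where "P = proj m (ccv_cone m) s"
  have "P \<in> ccv_cone m"
    using proj_in_and_minimal[OF closed_convex_in_ccv_cone] unfolding P_def by blast
  then have "(\<Sum>k<m. (s k - P k) * ((P k + c k) - P k)) \<le> 0"
    using proj_variational_inequality[OF closed_convex_in_ccv_cone ccv_cone_add[OF _ assms]]
    unfolding P_def by blast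
  then show ?thesis unfolding P_def[symmetric] by (simp add: algebra_simps sum_subtractf)
qed

lemma block_bound:
  fixes xi mu f :: "nat \<Rightarrow> real"
  assumes ab: "a < b" "b \<le> n" and mu: "mu \<in> cvx_cone n"
    and aff: "\<forall>i\<in>{a..<b}. f i = \<alpha> + \<beta> * real i"
  shows "(\<Sum>i\<in>{a..<b}. xi i * (f i - mu i))
     \<le> sqnorm (card {a..<b}) (proj (card {a..<b}) (ccv_cone (card {a..<b})) (subvec xi {a..<b})) / 2
       + (\<Sum>i\<in>{a..<b}. (f i - mu i)^2) / 2"
proof -
  define m where "m = b - a"
  define s where "s = subvec xi {a..<b}"
  define c where "c k = (if k < m then f (a + k) - mu (a + k) else 0)" for k
  define P where "P = proj m (ccv_cone m) s"
  have "card {a..<b} = m" unfolding m_def by simp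
  have "c \<in> ccv_cone m"
    unfolding c_def m_def using affine_minus_cvx_cone_in_ccv_cone[OF ab mu aff] .
  have "(\<Sum>k<m. s k * c k) \<le> (\<Sum>k<m. P k * c k)"
    unfolding P_def by (rule inner_le_inner_proj_ccv_cone[OF \<open>c \<in> ccv_cone m\<close>])
  also have "\<dots> \<le> (\<Sum>k<m. (P k)^2 / 2 + (c k)^2 / 2)"
  proof (rule sum_mono)
    fix k
    show "P k * c k \<le> (P k)^2 / 2 + (c k)^2 / 2"
      using sum_squares_ge_zero[of "P k - c k" 0] by (simp add: power2_eq_square algebra_simps)
  qed
  also have "\<dots> = sqnorm m P / 2 + (\<Sum>k<m. (c k)^2) / 2"
    unfolding sqnorm_def by (simp add: sum.distrib sum_divide_distrib)
  finally have "(\<Sum>k<m. s k * c k) \<le> sqnorm m P / 2 + (\<Sum>k<m. (c k)^2) / 2" .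
  moreover have "s k = xi (a + k)" if "k < m" for k
    using that unfolding s_def subvec_def by (simp add: m_def)
  then have "(\<Sum>k<m. s k * c k) = (\<Sum>i\<in>{a..<b}. xi i * (f i - mu i))"
    unfolding sum_atLeastLessThan_shift[OF less_imp_le[OF ab(1)]] m_def[symmetric]
    by (intro sum.cong) (auto simp: c_def)
  moreover have "(\<Sum>k<m. (c k)^2) = (\<Sum>i\<in>{a..<b}. (f i - mu i)^2)"
    unfolding sum_atLeastLessThan_shift[OF less_imp_le[OF ab(1)]] m_def[symmetric]
    by (intro sum.cong) (auto simp: c_def)
  ultimately show ?thesis unfolding \<open>card {a..<b} = m\<close> P_def s_def by simp
qed

theorem mainTheorem8:
  fixes n qhat :: nat and mu xi muhat :: "nat \<Rightarrow> real" and T :: "nat \<Rightarrow> nat set"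
  assumes "n \<ge> 1"
    and "mu \<in> cvx_cone n"
    and "xi \<in> vec_space n"
    and "muhat = proj n (cvx_cone n) (\<lambda>i. mu i + xi i)"
    and "qhat = num_pieces n muhat"
    and "\<forall>j<qhat. \<exists>a b. a < b \<and> T j = {a..<b}"
    and "\<forall>j<qhat. \<forall>k<qhat. j \<noteq> k \<longrightarrow> T j \<inter> T k = {}"
    and "(\<Union>j<qhat. T j) = {..<n}"
    and "\<forall>j<qhat. \<exists>\<alpha> \<beta>. \<forall>i\<in>T j. muhat i = \<alpha> + \<beta> * real i"
  shows "sqdist n muhat mu
           \<le> (\<Sum>j<qhat. sqnorm (card (T j))
                 (proj (card (T j)) (ccv_cone (card (T j))) (subvec xi (T j))))"
proof -
  define D where "D i = muhat i - mu i" for i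
  define S where "S j = sqnorm (card (T j)) (proj (card (T j)) (ccv_cone (card (T j))) (subvec xi (T j)))" for j
  have "(\<Sum>i<n. (mu i + xi i - muhat i) * (mu i - muhat i)) \<le> 0"
    using proj_variational_inequality[OF closed_convex_in_cvx_cone assms(2)] assms(4) by simp
  also have "(\<Sum>i<n. (mu i + xi i - muhat i) * (mu i - muhat i)) = (\<Sum>i<n. (D i)^2 - xi i * D i)"
    unfolding D_def by (rule sum.cong) (auto simp: power2_eq_square algebra_simps)
  finally have basic: "(\<Sum>i<n. (D i)^2) \<le> (\<Sum>i<n. xi i * D i)"
    by (simp add: sum_subtractf)
  have split: "(\<Sum>i<n. g i) = (\<Sum>j<qhat. \<Sum>i\<in>T j. g i)" for g :: "nat \<Rightarrow> real"
    unfolding assms(8)[symmetric] using assms(6,7) by (subst sum.UNION_disjoint) auto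
  have block: "(\<Sum>i\<in>T j. xi i * D i) \<le> S j / 2 + (\<Sum>i\<in>T j. (D i)^2) / 2" if "j < qhat" for j
  proof -
    obtain a b where ab: "a < b" "T j = {a..<b}" using assms(6) \<open>j < qhat\<close> by blast
    obtain \<alpha> \<beta> where "\<forall>i\<in>T j. muhat i = \<alpha> + \<beta> * real i" using assms(9) \<open>j < qhat\<close> by blast
    have "b - 1 \<in> (\<Union>j<qhat. T j)" using ab \<open>j < qhat\<close> by auto
    then have "b \<le> n" unfolding assms(8) using ab(1) by simp
    show ?thesis
      using block_bound[OF ab(1) \<open>b \<le> n\<close> assms(2)] \<open>\<forall>i\<in>T j. _\<close>
      unfolding S_def D_def ab(2) by blast
  qed
  have "(\<Sum>i<n. (D i)^2) \<le> (\<Sum>j<qhat. \<Sum>i\<in>T j. xi i * D i)" using basic split by simp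
  also have "\<dots> \<le> (\<Sum>j<qhat. S j / 2 + (\<Sum>i\<in>T j. (D i)^2) / 2)" by (rule sum_mono) (use block in auto)
  also have "\<dots> = (\<Sum>j<qhat. S j) / 2 + (\<Sum>i<n. (D i)^2) / 2"
    using split[of "\<lambda>i. (D i)^2"] by (simp add: sum.distrib sum_divide_distrib)
  finally show ?thesis unfolding sqdist_def D_def S_def by simp
qed

end
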